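(* For every angle $0<\alpha<\pi$ there is $p_0(\alpha)$ such that for every prime $p>p_0(\alpha)$ the isosceles triangle whose angle at the apex (between the two equal sides) equals $\alpha$ is Euclidean sub-$p$-toral.
   Context: A $p$-torus is a group isomorphic to $(\mathbb{Z}_p)^\alpha$ for some $\alpha\ge1$. A set $X\subset\mathbb{R}^k$ is Euclidean sub-$p$-toral if there exist $n\ge k$, a $p$-torus $G$ and an action of $G$ on $\mathbb{R}^n$ by isometries such that $X$ (viewed in $\mathbb{R}^n$ via the standard inclusion $\mathbb{R}^k\subset\mathbb{R}^n$) is contained in a single $G$-orbit. A triangle is identified with its set of three vertices; being sub-$p$-toral is invariant under isometries. *)

theory Defs
  imports Complex_Main "HOL-Computational_Algebra.Primes"
begin

text \<open>Points of R^n are modelled as functions nat => real vanishing from index n on;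
  the standard inclusion R^k in R^n (k <= n) is then literal set inclusion.\<close>

definition Rn :: "nat \<Rightarrow> (nat \<Rightarrow> real) set" where
  "Rn n = {x. \<forall>i\<ge>n. x i = 0}"

definition edist :: "nat \<Rightarrow> (nat \<Rightarrow> real) \<Rightarrow> (nat \<Rightarrow> real) \<Rightarrow> real" where
  "edist n x y = sqrt (\<Sum>i<n. (x i - y i)^2)"

text \<open>The p-torus (Z_p)^a, concretely: functions nat => nat with values < p on indices < a
  and 0 elsewhere, with componentwise addition mod p.\<close>

definition ptorus :: "nat \<Rightarrow> nat \<Rightarrow> (nat \<Rightarrow> nat) set" where
  "ptorus p a = {g. \<forall>i. (i < a \<longrightarrow> g i < p) \<and> (a \<le> i \<longrightarrow> g i = 0)}"

definition ptorus_add :: "nat \<Rightarrow> (nat \<Rightarrow> nat) \<Rightarrow> (nat \<Rightarrow> nat) \<Rightarrow> (nat \<Rightarrow> nat)" where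
  "ptorus_add p g h = (\<lambda>i. (g i + h i) mod p)"

definition isometric_ptorus_action ::
  "nat \<Rightarrow> nat \<Rightarrow> nat \<Rightarrow> ((nat \<Rightarrow> nat) \<Rightarrow> (nat \<Rightarrow> real) \<Rightarrow> (nat \<Rightarrow> real)) \<Rightarrow> bool" where
  "isometric_ptorus_action p a n act \<longleftrightarrow>
     (\<forall>g\<in>ptorus p a. \<forall>x\<in>Rn n. act g x \<in> Rn n) \<and>
     (\<forall>x\<in>Rn n. act (\<lambda>i. 0) x = x) \<and>
     (\<forall>g\<in>ptorus p a. \<forall>h\<in>ptorus p a. \<forall>x\<in>Rn n.
        act (ptorus_add p g h) x = act g (act h x)) \<and>
     (\<forall>g\<in>ptorus p a. \<forall>x\<in>Rn n. \<forall>y\<in>Rn n. edist n (act g x) (act g y) = edist n x y)"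

definition euclidean_sub_ptoral :: "nat \<Rightarrow> nat \<Rightarrow> (nat \<Rightarrow> real) set \<Rightarrow> bool" where
  "euclidean_sub_ptoral p k X \<longleftrightarrow> X \<subseteq> Rn k \<and>
     (\<exists>n\<ge>k. \<exists>a\<ge>1. \<exists>act. isometric_ptorus_action p a n act \<and>
        (\<exists>x0\<in>Rn n. X \<subseteq> (\<lambda>g. act g x0) ` ptorus p a))"

definition pt2 :: "real \<Rightarrow> real \<Rightarrow> (nat \<Rightarrow> real)" where
  "pt2 u v = (\<lambda>i. if i = 0 then u else if i = 1 then v else 0)"

definition isosceles_triangle :: "real \<Rightarrow> real \<Rightarrow> (nat \<Rightarrow> real) set" where
  "isosceles_triangle L t =
     {pt2 0 0, pt2 (L * cos (t/2)) (L * sin (t/2)), pt2 (L * cos (t/2)) (- L * sin (t/2))}"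

end

theory Submission
  imports Defs
begin

text \<open>
  Rotating the two coordinate planes of R^4 by angles f1, f2 that are multiples of 2 pi / p gives an
  isometric action of Z_p. The orbit points w, g w, g^-1 w of w = (c1, 0, c2, 0) form an isosceles
  triangle with apex w, whose height and half base are the lengths of (c1 (cos f1 - 1), c2 (cos f2 - 1))
  and (c1 sin f1, c2 sin f2). For odd p take f1 = pi - pi / p and f2 = 2 pi / p: in each plane alone the
  half apex angle is pi / (2p), resp. pi / 2 - pi / p, and the squared radii c1^2, c2^2 can be chosen
  (as nonnegative coordinates in a cone) to realise any half apex angle in between, in particular t / 2
  once p is large. A rigid motion of R^4 then moves the triangle into R^2.
\<close>

definition plane_rotation :: "nat \<Rightarrow> nat \<Rightarrow> real \<Rightarrow> (nat \<Rightarrow> real) \<Rightarrow> (nat \<Rightarrow> real)" where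
  "plane_rotation i j a v = v(i := cos a * v i - sin a * v j, j := sin a * v i + cos a * v j)"

lemma plane_rotation_zero [simp]: "plane_rotation i j 0 v = v"
  by (simp add: plane_rotation_def)

lemma plane_rotation_add:
  assumes "i \<noteq> j"
  shows "plane_rotation i j a (plane_rotation i j b v) = plane_rotation i j (a + b) v"
  using assms by (auto simp: plane_rotation_def fun_eq_iff cos_add sin_add algebra_simps)

lemma plane_rotation_commute:
  assumes "i \<noteq> k" "i \<noteq> l" "j \<noteq> k" "j \<noteq> l"
  shows "plane_rotation i j a (plane_rotation k l b v) = plane_rotation k l b (plane_rotation i j a v)"
  using assms by (auto simp: plane_rotation_def fun_eq_iff)

lemma plane_rotation_Rn: "i < n \<Longrightarrow> j < n \<Longrightarrow> v \<in> Rn n \<Longrightarrow> plane_rotation i j a v \<in> Rn n"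
  by (simp add: plane_rotation_def Rn_def)

lemma plane_rotation_onto_axis:
  assumes "i \<noteq> j" "(v i)\<^sup>2 + (v j)\<^sup>2 = r\<^sup>2" "r \<noteq> 0" "cos a = v i / r" "sin a = - v j / r"
  shows "plane_rotation i j a v = v(i := r, j := 0)"
proof -
  have "cos a * v i - sin a * v j = ((v i)\<^sup>2 + (v j)\<^sup>2) / r"
    using assms(4,5) by (simp add: power2_eq_square add_divide_distrib)
  also have "\<dots> = r" using assms(2,3) by (simp add: power2_eq_square)
  finally show ?thesis using assms(1,4,5) by (simp add: plane_rotation_def algebra_simps)
qed

lemma angle_onto_axis:
  fixes x y r :: real
  assumes "x\<^sup>2 + y\<^sup>2 = r\<^sup>2" "r \<noteq> 0"
  obtains a where "cos a = x / r" "sin a = - y / r"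
proof -
  have "(x / r)\<^sup>2 + (- y / r)\<^sup>2 = 1"
    using assms by (simp add: power_divide add_divide_distrib[symmetric])
  then obtain a where "x / r = cos a" "- y / r = sin a"
    by (rule sincos_total_2pi)
  then show thesis using that by simp
qed

lemma sum_remove_two:
  assumes "finite A" "i \<in> A" "j \<in> A" "i \<noteq> j"
  shows "sum f A = f i + f j + sum f (A - {i, j})"
proof -
  have "sum f A = f i + sum f (A - {i})" using assms by (simp add: sum.remove)
  also have "sum f (A - {i}) = f j + sum f (A - {i} - {j})" using assms by (simp add: sum.remove)
  finally show ?thesis by (simp add: insert_commute set_diff_eq add.assoc)
qed

lemma edist_plane_rotation:
  assumes "i \<noteq> j" "i < n" "j < n"
  shows "edist n (plane_rotation i j a x) (plane_rotation i j a y) = edist n x y"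
proof -
  define x' y' where "x' = plane_rotation i j a x" and "y' = plane_rotation i j a y"
  have rot: "(cos a * u - sin a * w)\<^sup>2 + (sin a * u + cos a * w)\<^sup>2 = u\<^sup>2 + w\<^sup>2" for u w
  proof -
    have "(cos a * u - sin a * w)\<^sup>2 + (sin a * u + cos a * w)\<^sup>2 = ((sin a)\<^sup>2 + (cos a)\<^sup>2) * (u\<^sup>2 + w\<^sup>2)"
      by algebra
    also have "\<dots> = u\<^sup>2 + w\<^sup>2" by simp
    finally show ?thesis .
  qed
  have ij: "(x' i - y' i)\<^sup>2 + (x' j - y' j)\<^sup>2 = (x i - y i)\<^sup>2 + (x j - y j)\<^sup>2"
    using assms(1) rot[of "x i - y i" "x j - y j"]
    by (simp add: x'_def y'_def plane_rotation_def algebra_simps)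
  have rest: "(\<Sum>k\<in>{..<n} - {i, j}. (x' k - y' k)\<^sup>2) = (\<Sum>k\<in>{..<n} - {i, j}. (x k - y k)\<^sup>2)"
    by (rule sum.cong) (auto simp: x'_def y'_def plane_rotation_def)
  have "(\<Sum>k<n. (x' k - y' k)\<^sup>2) = (\<Sum>k<n. (x k - y k)\<^sup>2)"
    using assms ij rest by (simp add: sum_remove_two[of "{..<n}" i j])
  then show ?thesis by (simp add: edist_def x'_def y'_def)
qed

lemma edist_diff_right: "edist n (x - w) (y - w) = edist n x y"
  by (simp add: edist_def)

lemma isometric_ptorus_action_cyclic:
  fixes F :: "nat \<Rightarrow> (nat \<Rightarrow> real) \<Rightarrow> (nat \<Rightarrow> real)"
  assumes "0 < p"
    and maps: "\<And>k x. x \<in> Rn n \<Longrightarrow> F k x \<in> Rn n"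
    and zero: "\<And>x. x \<in> Rn n \<Longrightarrow> F 0 x = x"
    and add: "\<And>j k x. x \<in> Rn n \<Longrightarrow> F j (F k x) = F (j + k) x"
    and period: "\<And>x. x \<in> Rn n \<Longrightarrow> F p x = x"
    and isometry: "\<And>k x y. x \<in> Rn n \<Longrightarrow> y \<in> Rn n \<Longrightarrow> edist n (F k x) (F k y) = edist n x y"
  shows "isometric_ptorus_action p 1 n (\<lambda>g. F (g 0))"
proof -
  have multiple: "F (p * q) x = x" if "x \<in> Rn n" for q x
  proof (induction q)
    case (Suc q)
    have "F (p * Suc q) x = F p (F (p * q) x)" using add that by (simp add: add.commute)
    then show ?case using Suc period that by simp
  qed (use zero that in simp)
  have mod: "F (k mod p) x = F k x" if "x \<in> Rn n" for k x
  proof -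
    have "F k x = F (k mod p + p * (k div p)) x" by simp
    also have "\<dots> = F (k mod p) x" using add multiple that by metis
    finally show ?thesis ..
  qed
  show ?thesis
    unfolding isometric_ptorus_action_def ptorus_add_def
    using maps zero add mod isometry by simp
qed

lemma isometric_ptorus_action_conjugate:
  assumes "isometric_ptorus_action p a n act"
    and "\<And>x. x \<in> Rn n \<Longrightarrow> T x \<in> Rn n" "\<And>x. x \<in> Rn n \<Longrightarrow> T' x \<in> Rn n"
    and "\<And>x. x \<in> Rn n \<Longrightarrow> T (T' x) = x" "\<And>x. x \<in> Rn n \<Longrightarrow> T' (T x) = x"
    and "\<And>x y. x \<in> Rn n \<Longrightarrow> y \<in> Rn n \<Longrightarrow> edist n (T x) (T y) = edist n x y"
  shows "isometric_ptorus_action p a n (\<lambda>g x. T (act g (T' x)))"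
proof -
  have "edist n (T' x) (T' y) = edist n x y" if "x \<in> Rn n" "y \<in> Rn n" for x y
    using assms(3,4,6) that by metis
  then show ?thesis
    using assms unfolding isometric_ptorus_action_def by simp
qed

lemma euclidean_sub_ptoral_isometric_image:
  assumes "isometric_ptorus_action p a n act" "1 \<le> a" "k \<le> n" "x0 \<in> Rn n"
    and "\<And>x. x \<in> Rn n \<Longrightarrow> T x \<in> Rn n" "\<And>x. x \<in> Rn n \<Longrightarrow> T' x \<in> Rn n"
    and "\<And>x. x \<in> Rn n \<Longrightarrow> T (T' x) = x" "\<And>x. x \<in> Rn n \<Longrightarrow> T' (T x) = x"
    and "\<And>x y. x \<in> Rn n \<Longrightarrow> y \<in> Rn n \<Longrightarrow> edist n (T x) (T y) = edist n x y"
    and "X \<subseteq> Rn k" "X \<subseteq> (\<lambda>g. T (act g x0)) ` ptorus p a"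
  shows "euclidean_sub_ptoral p k X"
proof -
  let ?act = "\<lambda>g x. T (act g (T' x))"
  have "isometric_ptorus_action p a n ?act"
    using assms(1,5-9) by (rule isometric_ptorus_action_conjugate)
  moreover have "T x0 \<in> Rn n" using assms(4,5) by simp
  moreover have "X \<subseteq> (\<lambda>g. ?act g (T x0)) ` ptorus p a" using assms(4,8,11) by simp
  ultimately show ?thesis
    unfolding euclidean_sub_ptoral_def using assms(2,3,10) by blast
qed

lemma nonneg_cone_coordinates:
  fixes a b A1 B1 A2 B2 :: real
  assumes "0 < a" "0 < A1" "0 \<le> A2" "b * A2 < a * B2" "a * B1 \<le> b * A1"
  obtains u v where "0 \<le> u" "0 \<le> v" "u * A1 + v * A2 = a" "u * B1 + v * B2 = b"
proof -
  define D where "D = A1 * B2 - A2 * B1"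
  have "a * (A2 * B1) \<le> b * A1 * A2" using mult_right_mono[OF assms(5,3)] by (simp add: mult_ac)
  also have "\<dots> < a * B2 * A1" using assms(2,4) by (simp add: mult.commute)
  finally have "0 < D" using assms(1) by (simp add: D_def algebra_simps)
  show thesis
  proof (rule that[of "(a * B2 - b * A2) / D" "(b * A1 - a * B1) / D"])
    show "0 \<le> (a * B2 - b * A2) / D" "0 \<le> (b * A1 - a * B1) / D"
      using \<open>0 < D\<close> assms(4,5) by simp_all
    show "(a * B2 - b * A2) / D * A1 + (b * A1 - a * B1) / D * A2 = a"
      "(a * B2 - b * A2) / D * B1 + (b * A1 - a * B1) / D * B2 = b"
      using \<open>0 < D\<close> by (simp_all add: field_simps) (simp_all add: D_def algebra_simps)
  qed
qed

lemma isosceles_radii_exist: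
  fixes L t e :: real
  assumes "0 < L" "0 < e" "e < t / 2" "e < (pi - t) / 2"
  shows "\<exists>c1 c2. (c1 * cos (pi - e) - c1)\<^sup>2 + (c2 * cos (2 * e) - c2)\<^sup>2 = (L * cos (t / 2))\<^sup>2
    \<and> (c1 * sin (pi - e))\<^sup>2 + (c2 * sin (2 * e))\<^sup>2 = (L * sin (t / 2))\<^sup>2"
proof -
  define c s where "c = cos (t / 2)" and "s = sin (t / 2)"
  have "0 < c" unfolding c_def using assms by (intro cos_gt_zero_pi) auto
  have "0 < s" unfolding s_def using assms by (intro sin_gt_zero) auto
  have "0 < sin e" using assms by (intro sin_gt_zero) auto
  have "0 < cos e" using assms by (intro cos_gt_zero_pi) auto
  have "s * sin e < c * cos e"
  proof -
    have "0 < cos (t / 2 + e)" using assms by (intro cos_gt_zero_pi) auto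
    then show ?thesis by (simp add: c_def s_def cos_add)
  qed
  then have "(L * s * (2 * sin e * sin e))\<^sup>2 < (L * c * (2 * sin e * cos e))\<^sup>2"
    using assms(1) \<open>0 < s\<close> \<open>0 < sin e\<close> by (intro power_strict_mono) auto
  moreover have "1 - cos (2 * e) = 2 * sin e * sin e" "sin (2 * e) = 2 * sin e * cos e"
    by (simp_all add: cos_double_sin sin_double power2_eq_square)
  ultimately have small: "(L * s)\<^sup>2 * (1 - cos (2 * e))\<^sup>2 < (L * c)\<^sup>2 * (sin (2 * e))\<^sup>2"
    by (simp only: power_mult_distrib)
  have "c * sin e \<le> s * (1 + cos e)"
  proof -
    have "0 < sin (t / 2 - e)" using assms by (intro sin_gt_zero) auto
    then show ?thesis using \<open>0 < s\<close> by (simp add: c_def s_def sin_diff algebra_simps)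
  qed
  then have "(L * c * sin e)\<^sup>2 \<le> (L * s * (1 + cos e))\<^sup>2"
    using assms(1) \<open>0 < c\<close> \<open>0 < sin e\<close> by (intro power_mono) auto
  then have large: "(L * c)\<^sup>2 * (sin (pi - e))\<^sup>2 \<le> (L * s)\<^sup>2 * (1 - cos (pi - e))\<^sup>2"
    by (simp add: power_mult_distrib)
  obtain u v where uv: "0 \<le> u" "0 \<le> v"
    "u * (1 - cos (pi - e))\<^sup>2 + v * (1 - cos (2 * e))\<^sup>2 = (L * c)\<^sup>2"
    "u * (sin (pi - e))\<^sup>2 + v * (sin (2 * e))\<^sup>2 = (L * s)\<^sup>2"
    using \<open>0 < cos e\<close> assms(1) \<open>0 < c\<close> small large
    by (rule_tac nonneg_cone_coordinates) auto
  have sqrt_diff: "(sqrt w * x - sqrt w)\<^sup>2 = w * (1 - x)\<^sup>2" if "0 \<le> w" for w x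
  proof -
    have "(sqrt w * x - sqrt w)\<^sup>2 = (sqrt w * (1 - x))\<^sup>2" by (simp add: power2_eq_square algebra_simps)
    then show ?thesis using that by (simp add: power_mult_distrib)
  qed
  show ?thesis
  proof (intro exI conjI)
    show "(sqrt u * cos (pi - e) - sqrt u)\<^sup>2 + (sqrt v * cos (2 * e) - sqrt v)\<^sup>2 = (L * cos (t / 2))\<^sup>2"
      using uv(1-3) by (simp only: sqrt_diff c_def)
    show "(sqrt u * sin (pi - e))\<^sup>2 + (sqrt v * sin (2 * e))\<^sup>2 = (L * sin (t / 2))\<^sup>2"
      using uv(1,2,4) by (simp add: s_def power_mult_distrib)
  qed
qed

lemma euclidean_sub_ptoral_rigid_motion:
  assumes "isometric_ptorus_action p a n act" "1 \<le> a" "m \<le> n" "w \<in> Rn n"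
    and "i \<noteq> j" "k \<noteq> l" "i < n" "j < n" "k < n" "l < n"
    and "X \<subseteq> Rn m"
    and "X \<subseteq> (\<lambda>g. plane_rotation k l \<beta> (plane_rotation i j \<alpha> (act g w - w))) ` ptorus p a"
  shows "euclidean_sub_ptoral p m X"
proof -
  define T where "T x = plane_rotation k l \<beta> (plane_rotation i j \<alpha> (x - w))" for x
  define T' where "T' y = (\<lambda>q. plane_rotation i j (- \<alpha>) (plane_rotation k l (- \<beta>) y) q + w q)" for y
  have diff_Rn: "x - w \<in> Rn n" if "x \<in> Rn n" for x
    using that assms(4) by (simp add: Rn_def)
  have translate_back: "(\<lambda>q. z q + w q) - w = z" for z
    by (simp add: fun_eq_iff)
  show ?thesis
  proof (rule euclidean_sub_ptoral_isometric_image[where T = T and T' = T'])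
    show "T x \<in> Rn n" if "x \<in> Rn n" for x
      using that assms(7-10) by (simp add: T_def diff_Rn plane_rotation_Rn)
    show "T' x \<in> Rn n" if "x \<in> Rn n" for x
      using that assms(4,7-10) plane_rotation_Rn by (simp add: T'_def Rn_def)
    show "T (T' x) = x" "T' (T x) = x" for x
      using assms(5,6) by (simp_all add: T_def T'_def plane_rotation_add translate_back)
    show "edist n (T x) (T y) = edist n x y" for x y
      using assms(5-10) by (simp add: T_def edist_plane_rotation edist_diff_right)
  qed (use assms(1-4,11,12) in \<open>simp_all add: T_def\<close>)
qed

definition double_rotation :: "real \<Rightarrow> real \<Rightarrow> (nat \<Rightarrow> real) \<Rightarrow> (nat \<Rightarrow> real)" where
  "double_rotation \<alpha> \<beta> x = plane_rotation 0 1 \<alpha> (plane_rotation 2 3 \<beta> x)"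

lemma double_rotation_add:
  "double_rotation \<alpha> \<beta> (double_rotation \<alpha>' \<beta>' x) = double_rotation (\<alpha> + \<alpha>') (\<beta> + \<beta>') x"
  unfolding double_rotation_def
  by (subst plane_rotation_commute[where i=2 and j=3 and k=0 and l=1]) (simp_all add: plane_rotation_add)

lemma double_rotation_Rn: "x \<in> Rn 4 \<Longrightarrow> double_rotation \<alpha> \<beta> x \<in> Rn 4"
  by (simp add: double_rotation_def plane_rotation_Rn)

lemma edist_double_rotation:
  "edist 4 (double_rotation \<alpha> \<beta> x) (double_rotation \<alpha> \<beta> y) = edist 4 x y"
  by (simp add: double_rotation_def edist_plane_rotation)

lemma isometric_ptorus_action_double_rotation:
  assumes "0 < p" "f1 = 2 * pi * real m1 / real p" "f2 = 2 * pi * real m2 / real p"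
  shows "isometric_ptorus_action p 1 4 (\<lambda>g. double_rotation (real (g 0) * f1) (real (g 0) * f2))"
proof (rule isometric_ptorus_action_cyclic)
  have "real p * f1 = 2 * real m1 * pi" "real p * f2 = 2 * real m2 * pi"
    using assms by simp_all
  then show "double_rotation (real p * f1) (real p * f2) x = x" for x
    by (simp add: double_rotation_def plane_rotation_def)
qed (simp_all add: assms(1) double_rotation_add distrib_right double_rotation_Rn edist_double_rotation
    double_rotation_def[of 0 0])

lemma cos_sin_pred_mult_period:
  assumes "0 < p" "f = 2 * pi * real m / real p"
  shows "cos ((real p - 1) * f) = cos f" "sin ((real p - 1) * f) = - sin f"
proof -
  have "(real p - 1) * f = 2 * real m * pi - f" using assms by (simp add: field_simps)
  then show "cos ((real p - 1) * f) = cos f" "sin ((real p - 1) * f) = - sin f"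
    by (simp_all add: cos_diff sin_diff)
qed

lemma plane_rotations_onto_pt2:
  assumes "u1\<^sup>2 + u2\<^sup>2 = X\<^sup>2" "v1\<^sup>2 + v2\<^sup>2 = Y\<^sup>2" "X \<noteq> 0" "Y \<noteq> 0"
  obtains a b where "\<And>\<sigma>. \<sigma>\<^sup>2 = 1 \<Longrightarrow> plane_rotation 1 3 b (plane_rotation 0 2 a
    ((\<lambda>i. 0)(0 := u1, 1 := \<sigma> * v1, 2 := u2, 3 := \<sigma> * v2))) = pt2 X (\<sigma> * Y)"
proof -
  obtain a where a: "cos a = u1 / X" "sin a = - u2 / X"
    using angle_onto_axis assms(1,3) .
  obtain b where b: "cos b = v1 / Y" "sin b = - v2 / Y"
    using angle_onto_axis assms(2,4) .
  have "plane_rotation 1 3 b (plane_rotation 0 2 a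
      ((\<lambda>i. 0)(0 := u1, 1 := \<sigma> * v1, 2 := u2, 3 := \<sigma> * v2))) = pt2 X (\<sigma> * Y)"
    if "\<sigma>\<^sup>2 = 1" for \<sigma>
  proof -
    let ?v = "(\<lambda>i. 0)(0 := u1, 1 := \<sigma> * v1, 2 := u2, 3 := \<sigma> * v2)"
    have onto_X: "plane_rotation 0 2 a ?v = ?v(0 := X, 2 := 0)"
      using assms a by (intro plane_rotation_onto_axis) simp_all
    have onto_Y: "plane_rotation 1 3 b (?v(0 := X, 2 := 0)) = ?v(0 := X, 2 := 0, 1 := \<sigma> * Y, 3 := 0)"
      using assms b that power_one_right[of \<sigma>]
      by (intro plane_rotation_onto_axis) (auto simp: power_mult_distrib)
    show ?thesis unfolding onto_X onto_Y by (simp add: pt2_def fun_eq_iff)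
  qed
  then show thesis by (rule that)
qed

lemma isosceles_euclidean_sub_ptoral_of_radii:
  fixes p :: nat
  assumes "1 < p" "0 < X" "0 < Y"
    and X: "(c1 * cos f1 - c1)\<^sup>2 + (c2 * cos f2 - c2)\<^sup>2 = X\<^sup>2"
    and Y: "(c1 * sin f1)\<^sup>2 + (c2 * sin f2)\<^sup>2 = Y\<^sup>2"
    and f: "f1 = 2 * pi * real m1 / real p" "f2 = 2 * pi * real m2 / real p"
  shows "euclidean_sub_ptoral p 2 {pt2 0 0, pt2 X Y, pt2 X (- Y)}"
proof -
  define act where "act = (\<lambda>g :: nat \<Rightarrow> nat. double_rotation (real (g 0) * f1) (real (g 0) * f2))"
  define w :: "nat \<Rightarrow> real" where "w = (\<lambda>i. 0)(0 := c1, 2 := c2)"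
  define side where "side \<sigma> = (\<lambda>i::nat. 0)(0 := c1 * cos f1 - c1, 1 := \<sigma> * (c1 * sin f1),
    2 := c2 * cos f2 - c2, 3 := \<sigma> * (c2 * sin f2))" for \<sigma> :: real
  define g where "g k = (\<lambda>i::nat. 0::nat)(0 := k)" for k
  have orbit: "act (g 0) w - w = (\<lambda>i. 0)" "act (g 1) w - w = side 1" "act (g (p - 1)) w - w = side (- 1)"
    using assms(1) by (simp_all add: act_def g_def double_rotation_def plane_rotation_def w_def side_def
      fun_eq_iff cos_sin_pred_mult_period[OF _ f(1)] cos_sin_pred_mult_period[OF _ f(2)])
  obtain a b where vertex: "\<And>\<sigma>. \<sigma>\<^sup>2 = 1 \<Longrightarrow> plane_rotation 1 3 b (plane_rotation 0 2 a (side \<sigma>)) = pt2 X (\<sigma> * Y)"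
    unfolding side_def using assms(2,3) by (rule_tac plane_rotations_onto_pt2[OF X Y]) auto
  let ?motion = "\<lambda>x. plane_rotation 1 3 b (plane_rotation 0 2 a x)"
  have "pt2 0 0 = ?motion (act (g 0) w - w)"
    by (simp add: orbit plane_rotation_def pt2_def fun_eq_iff)
  moreover have "pt2 X Y = ?motion (act (g 1) w - w)" "pt2 X (- Y) = ?motion (act (g (p - 1)) w - w)"
    unfolding orbit using vertex[of 1] vertex[of "- 1"] by simp_all
  moreover have "g k \<in> ptorus p 1" if "k < p" for k
    using that by (simp add: g_def ptorus_def)
  ultimately have orbit_image: "{pt2 0 0, pt2 X Y, pt2 X (- Y)} \<subseteq> (\<lambda>g. ?motion (act g w - w)) ` ptorus p 1"
    using assms(1) by auto
  have action: "isometric_ptorus_action p 1 4 act"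
    unfolding act_def using assms(1) f by (intro isometric_ptorus_action_double_rotation) simp_all
  have "w \<in> Rn 4" "{pt2 0 0, pt2 X Y, pt2 X (- Y)} \<subseteq> Rn 2"
    by (auto simp: w_def pt2_def Rn_def)
  then show ?thesis
    by (rule_tac euclidean_sub_ptoral_rigid_motion[OF action _ _ _ _ _ _ _ _ _ _ orbit_image]) simp_all
qed

theorem lemma5:
  fixes t :: real
  assumes "0 < t" and "t < pi"
  shows "\<exists>p0::nat. \<forall>p::nat. prime p \<and> p > p0 \<longrightarrow>
           (\<forall>L::real. L > 0 \<longrightarrow> euclidean_sub_ptoral p 2 (isosceles_triangle L t))"
proof -
  define d where "d = min t (pi - t) / 2"
  have "0 < d" using assms by (simp add: d_def)
  show ?thesis
  proof (intro exI[of _ "nat \<lceil>pi / d\<rceil> + 2"] allI impI)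
    fix p :: nat and L :: real
    assume p: "prime p \<and> nat \<lceil>pi / d\<rceil> + 2 < p" and "0 < L"
    then have "odd p" using prime_odd_nat by auto
    then obtain k where k: "p = 2 * k + 1" by (rule oddE)
    define e where "e = pi / real p"
    have "pi / d < real p" using p by linarith
    then have "e < d" using \<open>0 < d\<close> p by (simp add: e_def field_simps)
    then have e: "0 < e" "e < t / 2" "e < (pi - t) / 2" using k by (auto simp: e_def d_def)
    obtain c1 c2 where radii:
      "(c1 * cos (pi - e) - c1)\<^sup>2 + (c2 * cos (2 * e) - c2)\<^sup>2 = (L * cos (t / 2))\<^sup>2"
      "(c1 * sin (pi - e))\<^sup>2 + (c2 * sin (2 * e))\<^sup>2 = (L * sin (t / 2))\<^sup>2"
      using isosceles_radii_exist[OF \<open>0 < L\<close> e] by blast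
    have angles: "pi - e = 2 * pi * real k / real p" "2 * e = 2 * pi * real (1::nat) / real p"
      by (simp_all add: e_def k field_simps)
    have legs: "0 < L * cos (t / 2)" "0 < L * sin (t / 2)"
      using \<open>0 < L\<close> assms by (simp_all add: cos_gt_zero_pi sin_gt_zero)
    have "1 < p" using p by linarith
    from isosceles_euclidean_sub_ptoral_of_radii[OF this legs radii angles]
    show "euclidean_sub_ptoral p 2 (isosceles_triangle L t)"
      by (simp add: isosceles_triangle_def)
  qed
qed

end
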